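(* Let $G$ be a polymer graph obtained by point-attaching from the monomer units $G_1,\ldots,G_k$. Then $$SO(G)>\sum_{i=1}^k SO(G_i).$$
   Context: All graphs are finite and simple. For a graph $G$ and a vertex $u$, $d_u$ denotes the degree of $u$ in $G$. The Sombor index of $G$ is $SO(G)=\sum_{uv\in E(G)}\sqrt{d_u^2+d_v^2}$. A polymer graph obtained by point-attaching from pairwise disjoint connected graphs $G_1,\ldots,G_k$ (the monomer units) is a connected graph constructed as follows: select a vertex of $G_1$ and a vertex of $G_2$ and identify these two vertices; then continue in this manner inductively, each time identifying a vertex of the graph built so far with a vertex of the next monomer unit. *)

theory Defs
  imports Complex_Main
begin

type_synonym 'a graph = "'a set \<times> 'a set set"

definition verts :: "'a graph \<Rightarrow> 'a set" where "verts G = fst G"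
definition edges :: "'a graph \<Rightarrow> 'a set set" where "edges G = snd G"

definition simple_graph :: "'a graph \<Rightarrow> bool" where
  "simple_graph G \<longleftrightarrow> finite (verts G) \<and>
     (\<forall>e\<in>edges G. \<exists>u v. e = {u, v} \<and> u \<noteq> v \<and> u \<in> verts G \<and> v \<in> verts G)"

definition degree :: "'a graph \<Rightarrow> 'a \<Rightarrow> nat" where
  "degree G u = card {e \<in> edges G. u \<in> e}"

definition adj :: "'a graph \<Rightarrow> ('a \<times> 'a) set" where
  "adj G = {(u, v). {u, v} \<in> edges G}"

definition connected_graph :: "'a graph \<Rightarrow> bool" where
  "connected_graph G \<longleftrightarrow> verts G \<noteq> {} \<and>
     (\<forall>u\<in>verts G. \<forall>v\<in>verts G. (u, v) \<in> (adj G)\<^sup>*)"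

text \<open>Sombor index: sum over edges uv of sqrt(d_u^2 + d_v^2); for an edge e = {u,v}
with u \<noteq> v, the inner sum over x \<in> e is exactly d_u^2 + d_v^2.\<close>
definition sombor :: "'a graph \<Rightarrow> real" where
  "sombor G = (\<Sum>e\<in>edges G. sqrt (\<Sum>x\<in>e. (real (degree G x))\<^sup>2))"

definition attach :: "'a graph \<Rightarrow> 'a \<Rightarrow> 'a graph \<Rightarrow> 'a \<Rightarrow> 'a graph" where
  "attach H x G' y =
     (verts H \<union> (verts G' - {y}),
      edges H \<union> ((\<lambda>e. (\<lambda>z. if z = y then x else z) ` e) ` edges G'))"

inductive polymer :: "'a graph list \<Rightarrow> 'a graph \<Rightarrow> bool" where
  single: "polymer [G1] G1"
| step: "polymer Gs H \<Longrightarrow> x \<in> verts H \<Longrightarrow> y \<in> verts G' \<Longrightarrow>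
           polymer (Gs @ [G']) (attach H x G' y)"

end

(* Attaching G' to H by identifying y with x keeps every edge of H and of G' as a distinct
   edge and decreases no degree, so SO(H) + SO(G') is at most the Sombor index of the result.
   Moreover the glued vertex keeps its edges from G' and gains those of H at x, of which there
   is at least one because monomers have no isolated vertices; hence an edge of G' through y
   becomes strictly heavier. *)
theory Submission
  imports Defs
begin

lemma simple_graphE:
  assumes "simple_graph G" "e \<in> edges G"
  obtains u v where "e = {u, v}" "u \<noteq> v" "u \<in> verts G" "v \<in> verts G"
  using assms unfolding simple_graph_def by blast

lemma simple_graph_edges_subset:
  assumes "simple_graph G"
  shows "edges G \<subseteq> Pow (verts G)"
proof
  fix e assume "e \<in> edges G"
  with assms obtain u v where "e = {u, v}" "u \<in> verts G" "v \<in> verts G"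
    by (rule simple_graphE)
  then show "e \<in> Pow (verts G)" by simp
qed

lemma simple_graph_finite_edges: "simple_graph G \<Longrightarrow> finite (edges G)"
  by (metis finite_Pow_iff finite_subset simple_graph_def simple_graph_edges_subset)

lemma simple_graph_finite_edge: "simple_graph G \<Longrightarrow> e \<in> edges G \<Longrightarrow> finite e"
  by (metis simple_graphE finite.emptyI finite_insert)

lemma connected_graph_no_isolated:
  assumes "connected_graph G" "card (verts G) \<ge> 2"
  shows "verts G \<subseteq> \<Union>(edges G)"
proof
  fix v assume v: "v \<in> verts G"
  obtain u where u: "u \<in> verts G" "u \<noteq> v"
  proof -
    have "\<not> verts G \<subseteq> {v}"
      using assms(2) card_mono[of "{v}" "verts G"] by auto
    then show thesis using that by blast
  qed
  have "(v, u) \<in> (adj G)\<^sup>*" using assms(1) v u unfolding connected_graph_def by blast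
  then show "v \<in> \<Union>(edges G)"
  proof (cases rule: converse_rtranclE)
    case base then show ?thesis using u by simp
  next
    case (step w)
    then show ?thesis by (auto simp: adj_def)
  qed
qed

definition edge_weight :: "('a \<Rightarrow> nat) \<Rightarrow> 'a set \<Rightarrow> real" where
  "edge_weight d e = sqrt (\<Sum>z\<in>e. (real (d z))\<^sup>2)"

lemma sombor_eq_sum_edge_weight: "sombor G = (\<Sum>e\<in>edges G. edge_weight (degree G) e)"
  by (simp add: sombor_def edge_weight_def)

lemma edge_weight_mono: "(\<And>z. z \<in> e \<Longrightarrow> d z \<le> d' z) \<Longrightarrow> edge_weight d e \<le> edge_weight d' e"
  unfolding edge_weight_def by (intro real_sqrt_le_mono sum_mono power_mono) auto

lemma edge_weight_strict_mono:
  assumes "finite e" "\<And>z. z \<in> e \<Longrightarrow> d z \<le> d' z" "y \<in> e" "d y < d' y"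
  shows "edge_weight d e < edge_weight d' e"
  unfolding edge_weight_def
proof (intro real_sqrt_less_mono sum_strict_mono_ex1)
  show "\<forall>z\<in>e. (real (d z))\<^sup>2 \<le> (real (d' z))\<^sup>2" using assms(2) by (simp add: power_mono)
  show "\<exists>z\<in>e. (real (d z))\<^sup>2 < (real (d' z))\<^sup>2"
    using assms(3,4) by (auto intro!: power_strict_mono)
qed (fact assms(1))

lemma edge_weight_image: "inj_on f e \<Longrightarrow> edge_weight d (f ` e) = edge_weight (d \<circ> f) e"
  by (simp add: edge_weight_def sum.reindex)

lemma verts_attach: "verts (attach H x G' y) = verts H \<union> (verts G' - {y})"
  by (simp add: attach_def verts_def)

lemma edges_attach:
  "edges (attach H x G' y) = edges H \<union> image (\<lambda>z. if z = y then x else z) ` edges G'"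
  by (simp add: attach_def edges_def)

lemma attach_no_isolated:
  assumes "verts H \<subseteq> \<Union>(edges H)" "verts G' \<subseteq> \<Union>(edges G')"
  shows "verts (attach H x G' y) \<subseteq> \<Union>(edges (attach H x G' y))"
proof
  fix v assume "v \<in> verts (attach H x G' y)"
  then consider "v \<in> verts H" | "v \<in> verts G'" "v \<noteq> y" by (auto simp: verts_attach)
  then show "v \<in> \<Union>(edges (attach H x G' y))"
  proof cases
    case 1 then show ?thesis using assms(1) by (auto simp: edges_attach)
  next
    case 2
    then obtain e where "e \<in> edges G'" "v \<in> e" using assms(2) by blast
    with 2 show ?thesis by (force simp: edges_attach)
  qed
qed

locale attachment =
  fixes H G' :: "'a graph" and x :: 'a and y :: 'a
  assumes simple_H: "simple_graph H" and simple_G': "simple_graph G'"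
    and x_in_H: "x \<in> verts H" and disjoint: "verts H \<inter> verts G' = {}"
begin

definition glue :: "'a \<Rightarrow> 'a" where "glue z = (if z = y then x else z)"

abbreviation joined :: "'a graph" where "joined \<equiv> attach H x G' y"

lemma edges_joined: "edges joined = edges H \<union> image glue ` edges G'"
  by (simp add: edges_attach glue_def[abs_def])

lemma inj_on_glue: "inj_on glue (verts G')"
  using x_in_H disjoint by (auto simp: inj_on_def glue_def)

lemma inj_on_image_glue: "inj_on (image glue) (edges G')"
  using inj_on_glue simple_graph_edges_subset[OF simple_G']
  by (blast intro: inj_on_image inj_on_subset)

lemma finite_edges_joined: "finite (edges joined)"
  using simple_H simple_G' by (simp add: edges_joined simple_graph_finite_edges)

lemma glued_edges_disjoint: "edges H \<inter> image glue ` edges G' = {}"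
proof -
  have "e \<notin> image glue ` edges G'" if e: "e \<in> edges H" for e
  proof
    assume "e \<in> image glue ` edges G'"
    then obtain e' where e': "e' \<in> edges G'" "e = glue ` e'" by blast
    from simple_H e obtain u v where uv: "e = {u, v}" "u \<noteq> v" "u \<in> verts H" "v \<in> verts H"
      by (rule simple_graphE)
    have "e' \<subseteq> verts G'" using e'(1) simple_graph_edges_subset[OF simple_G'] by blast
    then have "glue ` e' \<inter> verts H \<subseteq> {x}" using disjoint by (auto simp: glue_def)
    moreover have "u \<in> glue ` e'" "v \<in> glue ` e'" using uv(1) e'(2) by auto
    ultimately have "u = x" "v = x" using uv(3,4) by auto
    with uv(2) show False by simp
  qed
  then show ?thesis by blast
qed

lemma glue_in_verts_joined: "v \<in> verts G' \<Longrightarrow> glue v \<in> verts joined"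
  using x_in_H by (simp add: verts_attach glue_def)

lemma simple_joined: "simple_graph joined"
  unfolding simple_graph_def
proof (intro conjI ballI)
  show "finite (verts joined)"
    using simple_H simple_G' by (simp add: verts_attach simple_graph_def)
  fix e assume "e \<in> edges joined"
  then consider "e \<in> edges H" | e' where "e' \<in> edges G'" "e = glue ` e'"
    by (auto simp: edges_joined)
  then show "\<exists>u v. e = {u, v} \<and> u \<noteq> v \<and> u \<in> verts joined \<and> v \<in> verts joined"
  proof cases
    case 1
    from simple_H 1 obtain u v where "e = {u, v}" "u \<noteq> v" "u \<in> verts H" "v \<in> verts H"
      by (rule simple_graphE)
    then show ?thesis by (auto simp: verts_attach)
  next
    case 2
    from simple_G' 2(1) obtain u v where uv: "e' = {u, v}" "u \<noteq> v" "u \<in> verts G'" "v \<in> verts G'"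
      by (rule simple_graphE)
    then have "glue u \<noteq> glue v"
      using inj_on_glue by (simp add: inj_on_eq_iff)
    with uv 2(2) show ?thesis
      by (intro exI[of _ "glue u"] exI[of _ "glue v"]) (simp add: glue_in_verts_joined)
  qed
qed

lemma degree_H_le_joined: "degree H v \<le> degree joined v"
  unfolding degree_def using finite_edges_joined by (intro card_mono) (auto simp: edges_joined)

lemma degree_G'_eq_card_glued_edges: "degree G' v = card (image glue ` {e \<in> edges G'. v \<in> e})"
  unfolding degree_def
  by (rule card_image[symmetric], rule inj_on_subset[OF inj_on_image_glue]) auto

lemma degree_G'_le_joined: "degree G' v \<le> degree joined (glue v)"
proof -
  have "degree G' v = card (image glue ` {e \<in> edges G'. v \<in> e})"
    by (rule degree_G'_eq_card_glued_edges)
  also have "\<dots> \<le> degree joined (glue v)"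
    unfolding degree_def using finite_edges_joined by (intro card_mono) (auto simp: edges_joined)
  finally show ?thesis .
qed

lemma degree_glued_vertex_less:
  assumes "x \<in> \<Union>(edges H)"
  shows "degree G' y < degree joined x"
proof -
  obtain e0 where e0: "e0 \<in> edges H" "x \<in> e0" using assms by blast
  let ?E = "image glue ` {e \<in> edges G'. y \<in> e}"
  have "degree G' y = card ?E"
    by (rule degree_G'_eq_card_glued_edges)
  also have "\<dots> < card (insert e0 ?E)"
    using e0(1) glued_edges_disjoint simple_graph_finite_edges[OF simple_G']
    by (subst card_insert_disjoint) auto
  also have "\<dots> \<le> degree joined x"
    unfolding degree_def using finite_edges_joined e0
    by (intro card_mono) (auto simp: edges_joined glue_def)
  finally show ?thesis .
qed

lemma sombor_joined:
  "sombor joined = (\<Sum>e\<in>edges H. edge_weight (degree joined) e)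
                 + (\<Sum>e\<in>edges G'. edge_weight (degree joined \<circ> glue) e)"
proof -
  have "sombor joined = (\<Sum>e\<in>edges H. edge_weight (degree joined) e)
                      + (\<Sum>e\<in>image glue ` edges G'. edge_weight (degree joined) e)"
    unfolding sombor_eq_sum_edge_weight edges_joined
    using glued_edges_disjoint simple_H simple_G'
    by (intro sum.union_disjoint) (auto simp: simple_graph_finite_edges)
  also have "(\<Sum>e\<in>image glue ` edges G'. edge_weight (degree joined) e)
           = (\<Sum>e\<in>edges G'. edge_weight (degree joined \<circ> glue) e)"
    using inj_on_image_glue simple_graph_edges_subset[OF simple_G']
    by (subst sum.reindex) (auto intro!: sum.cong edge_weight_image inj_on_subset[OF inj_on_glue])
  finally show ?thesis .
qed

theorem sombor_joined_gt:
  assumes "x \<in> \<Union>(edges H)" "y \<in> \<Union>(edges G')"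
  shows "sombor H + sombor G' < sombor joined"
proof -
  have "sombor H \<le> (\<Sum>e\<in>edges H. edge_weight (degree joined) e)"
    unfolding sombor_eq_sum_edge_weight by (intro sum_mono edge_weight_mono degree_H_le_joined)
  moreover have "sombor G' < (\<Sum>e\<in>edges G'. edge_weight (degree joined \<circ> glue) e)"
    unfolding sombor_eq_sum_edge_weight
  proof (rule sum_strict_mono_ex1)
    obtain e where e: "e \<in> edges G'" "y \<in> e" using assms(2) by blast
    have "degree G' y < (degree joined \<circ> glue) y"
      using degree_glued_vertex_less[OF assms(1)] by (simp add: glue_def)
    with e have "edge_weight (degree G') e < edge_weight (degree joined \<circ> glue) e"
      by (intro edge_weight_strict_mono simple_graph_finite_edge[OF simple_G'])
         (auto simp: degree_G'_le_joined)
    with e show "\<exists>e\<in>edges G'. edge_weight (degree G') e < edge_weight (degree joined \<circ> glue) e"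
      by blast
  qed (auto simp: simple_graph_finite_edges[OF simple_G'] degree_G'_le_joined
            intro!: edge_weight_mono)
  ultimately show ?thesis by (simp add: sombor_joined)
qed

end

definition disjoint_verts :: "'a graph list \<Rightarrow> bool" where
  "disjoint_verts Gs \<longleftrightarrow>
     (\<forall>i<length Gs. \<forall>j<length Gs. i \<noteq> j \<longrightarrow> verts (Gs ! i) \<inter> verts (Gs ! j) = {})"

lemma disjoint_verts_snocD:
  assumes "disjoint_verts (Gs @ [G])"
  shows "disjoint_verts Gs" "verts G \<inter> \<Union>(verts ` set Gs) = {}"
proof -
  show "disjoint_verts Gs"
    using assms unfolding disjoint_verts_def
    by (metis length_append_singleton less_SucI nth_append)
  have "verts (Gs ! i) \<inter> verts G = {}" if "i < length Gs" for i
    using assms that unfolding disjoint_verts_def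
    by (metis length_append_singleton lessI less_SucI less_irrefl_nat nth_append nth_append_length)
  then have "verts g \<inter> verts G = {}" if "g \<in> set Gs" for g
    using that by (metis in_set_conv_nth)
  then show "verts G \<inter> \<Union>(verts ` set Gs) = {}" by blast
qed

lemma polymer_verts_subset: "polymer Gs G \<Longrightarrow> verts G \<subseteq> \<Union>(verts ` set Gs)"
  by (induction rule: polymer.induct) (auto simp: verts_attach)

lemma polymer_no_isolated:
  "polymer Gs G \<Longrightarrow> \<forall>g\<in>set Gs. verts g \<subseteq> \<Union>(edges g) \<Longrightarrow> verts G \<subseteq> \<Union>(edges G)"
  by (induction rule: polymer.induct) (simp_all add: attach_no_isolated)

lemma polymer_attachment:
  assumes "polymer Gs H" "simple_graph H" "simple_graph G'" "x \<in> verts H"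
    and "disjoint_verts (Gs @ [G'])"
  shows "attachment H G' x"
  using assms polymer_verts_subset[OF assms(1)] disjoint_verts_snocD(2)[OF assms(5)]
  by unfold_locales blast+

lemma polymer_simple:
  "polymer Gs G \<Longrightarrow> \<forall>g\<in>set Gs. simple_graph g \<Longrightarrow> disjoint_verts Gs \<Longrightarrow> simple_graph G"
proof (induction rule: polymer.induct)
  case (single G1)
  then show ?case by simp
next
  case (step Gs H x y G')
  then have "attachment H G' x"
    by (intro polymer_attachment) (auto dest: disjoint_verts_snocD)
  then show ?case by (rule attachment.simple_joined)
qed

lemma polymer_sum_sombor_less:
  assumes "polymer Gs G" "length Gs \<ge> 2"
    and "\<forall>g\<in>set Gs. simple_graph g \<and> verts g \<subseteq> \<Union>(edges g)" and "disjoint_verts Gs"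
  shows "(\<Sum>i<length Gs. sombor (Gs ! i)) < sombor G"
proof -
  have "(\<Sum>i<length Gs. sombor (Gs ! i)) \<le> sombor G \<and>
        (length Gs \<ge> 2 \<longrightarrow> (\<Sum>i<length Gs. sombor (Gs ! i)) < sombor G)"
    using assms(1,3,4)
  proof (induction rule: polymer.induct)
    case (single G1)
    then show ?case by simp
  next
    case (step Gs H x y G')
    have parts: "\<forall>g\<in>set Gs. simple_graph g \<and> verts g \<subseteq> \<Union>(edges g)" "disjoint_verts Gs"
      using step.prems by (auto dest: disjoint_verts_snocD)
    have "simple_graph H"
      using step.hyps(1) parts by (auto intro: polymer_simple)
    with step have "attachment H G' x"
      by (intro polymer_attachment) auto
    moreover have "x \<in> \<Union>(edges H)" "y \<in> \<Union>(edges G')"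
      using polymer_no_isolated[OF step.hyps(1)] parts(1) step.hyps(2,3) step.prems(1) by auto
    ultimately have "sombor H + sombor G' < sombor (attach H x G' y)"
      by (rule attachment.sombor_joined_gt)
    moreover have "(\<Sum>i<length Gs. sombor (Gs ! i)) \<le> sombor H"
      using step.IH parts by blast
    ultimately show ?case by (simp add: nth_append)
  qed
  with assms(2) show ?thesis by blast
qed

theorem mainTheorem1:
  fixes Gs :: "'a graph list" and G :: "'a graph"
  assumes "length Gs \<ge> 2"
    and "\<forall>i<length Gs. simple_graph (Gs ! i) \<and> connected_graph (Gs ! i)
                         \<and> card (verts (Gs ! i)) \<ge> 2"
    and "\<forall>i<length Gs. \<forall>j<length Gs. i \<noteq> j \<longrightarrow> verts (Gs ! i) \<inter> verts (Gs ! j) = {}"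
    and "polymer Gs G"
  shows "sombor G > (\<Sum>i<length Gs. sombor (Gs ! i))"
proof -
  have "\<forall>g\<in>set Gs. simple_graph g \<and> verts g \<subseteq> \<Union>(edges g)"
    using assms(2) connected_graph_no_isolated by (metis in_set_conv_nth)
  moreover have "disjoint_verts Gs"
    using assms(3) by (simp add: disjoint_verts_def)
  ultimately show ?thesis
    using polymer_sum_sombor_less assms(1,4) by blast
qed

end
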